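(* Let $p$ be a prime and $b$ an integer with $1<b<\frac{p-1}{2}$. Then $|\mathrm{inv}_{1,b}|>4$.
   Context: Let $S=\mathbb{C}[x_1,x_2]$, $\zeta=e^{2\pi i/p}$, $G=\mathbb{Z}/p\mathbb{Z}=\langle\zeta\rangle$ acting on $S$ by $x_1\mapsto\zeta x_1$, $x_2\mapsto\zeta^bx_2$, with invariant ring $S^G_{1,b}$ (spanned by monomials $x_1^cx_2^d$ with $c+bd\equiv0\pmod p$). $\mathrm{inv}_{1,b}$ denotes the minimal set of monomial generators of $S^G_{1,b}$ as a $\mathbb{C}$-algebra: the nonconstant invariant monomials that are not a product of two nonconstant invariant monomials. *)

theory Defs
  imports "HOL-Number_Theory.Number_Theory"
begin

text \<open>A monomial x1^c x2^d of C[x1,x2] is represented by its exponent pair (c,d).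
  It is invariant under the action x1 -> zeta x1, x2 -> zeta^b x2 of Z/pZ iff
  c + b d = 0 (mod p).\<close>

definition invariant_monomial :: "nat \<Rightarrow> int \<Rightarrow> nat \<times> nat \<Rightarrow> bool" where
  "invariant_monomial p b m \<longleftrightarrow> [int (fst m) + b * int (snd m) = 0] (mod int p)"

definition nonconstant :: "nat \<times> nat \<Rightarrow> bool" where
  "nonconstant m \<longleftrightarrow> m \<noteq> (0, 0)"

text \<open>Minimal monomial generators: nonconstant invariant monomials that are not
  a product of two nonconstant invariant monomials (product = sum of exponents).\<close>

definition inv_gens :: "nat \<Rightarrow> int \<Rightarrow> (nat \<times> nat) set" where
  "inv_gens p b = {m. nonconstant m \<and> invariant_monomial p b m \<and>
     \<not> (\<exists>m1 m2. nonconstant m1 \<and> invariant_monomial p b m1 \<and>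
                 nonconstant m2 \<and> invariant_monomial p b m2 \<and>
                 m = (fst m1 + fst m2, snd m1 + snd m2))}"

end

theory Submission
  imports Defs
begin

text \<open>Give the monomial x1^c x2^d the weight c + b d. For b > 0 every nonconstant
  invariant monomial has weight a positive multiple of p, so an invariant monomial of
  weight p cannot be a product of two nonconstant invariant ones. This makes
  x1^(p - k b) x2^k a generator for k = 0, 1, 2, as 2 b < p. Two more generators have
  large weight: x2^p, and x1 x2^d with b d = -1 (mod p) and d < p. They are generators
  because an invariant pure power of x2 has exponent divisible by p, while any
  factorisation of them contains such a factor.\<close>

lemma inv_gensI:
  assumes "nonconstant m" "invariant_monomial p b m"
    and "\<And>c1 d1 c2 d2. nonconstant (c1, d1) \<Longrightarrow> invariant_monomial p b (c1, d1) \<Longrightarrow>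
           nonconstant (c2, d2) \<Longrightarrow> invariant_monomial p b (c2, d2) \<Longrightarrow>
           m = (c1 + c2, d1 + d2) \<Longrightarrow> False"
  shows "m \<in> inv_gens p b"
  using assms unfolding inv_gens_def by fastforce

lemma inv_gensD:
  assumes "m \<in> inv_gens p b"
    and "nonconstant (c1, d1)" "invariant_monomial p b (c1, d1)"
    and "nonconstant (c2, d2)" "invariant_monomial p b (c2, d2)"
  shows "m \<noteq> (c1 + c2, d1 + d2)"
  using assms unfolding inv_gens_def by fastforce

lemma invariant_monomial_diff:
  assumes "invariant_monomial p b (c, d)" "invariant_monomial p b (c', d')"
    and "c' \<le> c" "d' \<le> d"
  shows "invariant_monomial p b (c - c', d - d')"
proof -
  have "[(int c + b * int d) - (int c' + b * int d') = 0 - 0] (mod int p)"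
    using assms(1,2) unfolding invariant_monomial_def by (intro cong_diff) simp_all
  then show ?thesis
    using assms(3,4) unfolding invariant_monomial_def by (simp add: of_nat_diff algebra_simps)
qed

lemma invariant_monomial_weight_ge:
  assumes "0 < b" "invariant_monomial p b m" "nonconstant m"
  shows "int p \<le> int (fst m) + b * int (snd m)"
proof -
  have "0 < int (fst m) + b * int (snd m)"
    using assms(1,3) unfolding nonconstant_def
    by (cases m) (auto simp: add_pos_nonneg add_nonneg_pos)
  moreover have "int p dvd int (fst m) + b * int (snd m)"
    using assms(2) unfolding invariant_monomial_def by (simp add: cong_0_iff)
  ultimately show ?thesis by (simp add: zdvd_imp_le)
qed

lemma in_inv_gens_if_weight_less:
  assumes "0 < b" "invariant_monomial p b m" "nonconstant m"
    and "int (fst m) + b * int (snd m) < 2 * int p"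
  shows "m \<in> inv_gens p b"
proof (rule inv_gensI[OF assms(3,2)])
  fix c1 d1 c2 d2
  assume "nonconstant (c1, d1)" "invariant_monomial p b (c1, d1)"
    "nonconstant (c2, d2)" "invariant_monomial p b (c2, d2)" and m: "m = (c1 + c2, d1 + d2)"
  then have "int p \<le> int c1 + b * int d1" "int p \<le> int c2 + b * int d2"
    using invariant_monomial_weight_ge[OF assms(1)] by fastforce+
  then show False using assms(4) m by (simp add: algebra_simps)
qed

lemma weight_p_monomial_in_inv_gens:
  fixes b k :: nat
  assumes "0 < b" "0 < p" "k * b \<le> p"
  shows "(p - k * b, k) \<in> inv_gens p (int b)"
proof -
  have weight: "int (p - k * b) + int b * int k = int p"
    using assms(3) by (simp add: of_nat_diff)
  show ?thesis
  proof (rule in_inv_gens_if_weight_less)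
    show "invariant_monomial p (int b) (p - k * b, k)"
      unfolding invariant_monomial_def by (simp add: weight cong_0_iff)
    show "nonconstant (p - k * b, k)"
      using assms unfolding nonconstant_def by auto
  qed (use assms weight in auto)
qed

lemma invariant_monomial_x2_power_iff:
  assumes "prime p" "\<not> int p dvd b"
  shows "invariant_monomial p b (0, d) \<longleftrightarrow> p dvd d"
proof -
  have "prime (int p)" using assms(1) by simp
  then have "int p dvd b * int d \<longleftrightarrow> int p dvd int d"
    using assms(2) by (simp add: prime_dvd_mult_iff)
  then show ?thesis unfolding invariant_monomial_def by (simp add: cong_0_iff)
qed

lemma invariant_x2_power_ge:
  assumes "prime p" "\<not> int p dvd b" "invariant_monomial p b (0, d)" "nonconstant (0, d)"
  shows "p \<le> d"
  using assms invariant_monomial_x2_power_iff[OF assms(1,2)]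
  unfolding nonconstant_def by (auto intro: dvd_imp_le)

lemma x2_power_in_inv_gens:
  assumes "prime p" "\<not> int p dvd b"
  shows "(0, p) \<in> inv_gens p b"
proof (rule inv_gensI)
  have "0 < p" using assms(1) prime_gt_0_nat by blast
  then show "nonconstant (0, p)" unfolding nonconstant_def by simp
  show "invariant_monomial p b (0, p)"
    using invariant_monomial_x2_power_iff[OF assms] by simp
next
  fix c1 d1 c2 d2
  assume factors: "nonconstant (c1, d1)" "invariant_monomial p b (c1, d1)"
    "nonconstant (c2, d2)" "invariant_monomial p b (c2, d2)" and m: "(0, p) = (c1 + c2, d1 + d2)"
  have "c1 = 0" "c2 = 0" using m by simp_all
  then have "p \<le> d1" "p \<le> d2" using invariant_x2_power_ge[OF assms] factors by auto
  moreover have "0 < p" using assms(1) prime_gt_0_nat by blast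
  ultimately show False using m by simp
qed

lemma x1_x2_power_in_inv_gens:
  assumes "prime p" "\<not> int p dvd b" "invariant_monomial p b (1, d)" "d < p"
  shows "(1, d) \<in> inv_gens p b"
proof (rule inv_gensI)
  show "nonconstant (1, d)" unfolding nonconstant_def by simp
  show "invariant_monomial p b (1, d)" by fact
next
  fix c1 d1 c2 d2
  assume "nonconstant (c1, d1)" "invariant_monomial p b (c1, d1)"
    "nonconstant (c2, d2)" "invariant_monomial p b (c2, d2)" and m: "(1, d) = (c1 + c2, d1 + d2)"
  moreover have "c1 = 0 \<or> c2 = 0" using m by simp linarith
  ultimately have "p \<le> d1 \<or> p \<le> d2"
    using invariant_x2_power_ge[OF assms(1,2)] by blast
  then show False using m assms(4) by auto
qed

lemma exists_invariant_x1_x2_power: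
  assumes "prime p" "\<not> int p dvd b"
  obtains d where "d < p" "invariant_monomial p b (1, d)"
proof -
  have "coprime b (int p)"
    using assms prime_imp_coprime[of "int p" b] by (simp add: coprime_commute)
  then obtain x where x: "[b * x = 1] (mod int p)" using cong_solve_coprime_int by blast
  have p0: "0 < int p" using assms(1) prime_gt_0_nat by simp
  define d where "d = nat ((- x) mod int p)"
  have d: "int d = (- x) mod int p" unfolding d_def using p0 by simp
  have "[int d = - x] (mod int p)" using d by (simp add: cong_def)
  then have "[1 + b * int d = b * x + b * (- x)] (mod int p)"
    using cong_add[OF cong_sym[OF x] cong_scalar_left] by blast
  then have "invariant_monomial p b (1, d)"
    unfolding invariant_monomial_def by (simp add: algebra_simps)
  moreover have "int d < int p" unfolding d using p0 by simp
  ultimately show ?thesis using that by simp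
qed

lemma inv_gens_subset_box:
  assumes "0 < p"
  shows "inv_gens p b \<subseteq> {0..p} \<times> {0..p}"
proof
  fix m assume gen: "m \<in> inv_gens p b"
  obtain c d where m: "m = (c, d)" by (cases m)
  have inv: "invariant_monomial p b (c, d)" using gen m unfolding inv_gens_def by simp
  have x1_power: "invariant_monomial p b (p, 0)" "nonconstant (p, 0)"
    and x2_power: "invariant_monomial p b (0, p)" "nonconstant (0, p)"
    using assms unfolding invariant_monomial_def nonconstant_def by (simp_all add: cong_0_iff)
  have "\<not> p < c"
  proof
    assume "p < c"
    then have "invariant_monomial p b (c - p, d)" "nonconstant (c - p, d)"
      using invariant_monomial_diff[OF inv x1_power(1)] unfolding nonconstant_def by auto
    moreover have "m = (p + (c - p), 0 + d)" using m \<open>p < c\<close> by simp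
    ultimately show False using inv_gensD[OF gen x1_power(2,1)] by blast
  qed
  moreover have "\<not> p < d"
  proof
    assume "p < d"
    then have "invariant_monomial p b (c, d - p)" "nonconstant (c, d - p)"
      using invariant_monomial_diff[OF inv x2_power(1)] unfolding nonconstant_def by auto
    moreover have "m = (0 + c, p + (d - p))" using m \<open>p < d\<close> by simp
    ultimately show False using inv_gensD[OF gen x2_power(2,1)] by blast
  qed
  ultimately show "m \<in> {0..p} \<times> {0..p}" using m by auto
qed

lemma finite_inv_gens:
  assumes "0 < p"
  shows "finite (inv_gens p b)"
  using finite_subset[OF inv_gens_subset_box[OF assms]] by blast

theorem lemma3p15:
  fixes p :: nat and b :: int
  assumes "prime p"
    and "1 < b"
    and "real_of_int b < (real p - 1) / 2"
  shows "card (inv_gens p b) > 4"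
proof -
  define b' where "b' = nat b"
  have b': "b = int b'" using assms(2) unfolding b'_def by simp
  have "real_of_int (2 * b + 1) < real_of_int (int p)" using assms(3) by simp
  then have bp: "0 < b'" "2 * b' + 1 < p" using assms(2) b' by linarith+
  have p: "0 < p" using bp by simp
  have ndvd: "\<not> int p dvd b" using bp b' by (auto dest: dvd_imp_le)
  obtain d where d: "d < p" "invariant_monomial p b (1, d)"
    using exists_invariant_x1_x2_power[OF assms(1) ndvd] by blast
  define G where "G = {(p, 0), (p - b', 1), (p - 2 * b', 2), (0, p), (1, d)}"
  have "G \<subseteq> inv_gens p b"
    unfolding G_def
    using weight_p_monomial_in_inv_gens[of b' p 0] weight_p_monomial_in_inv_gens[of b' p 1]
      weight_p_monomial_in_inv_gens[of b' p 2] x2_power_in_inv_gens[OF assms(1) ndvd]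
      x1_x2_power_in_inv_gens[OF assms(1) ndvd d(2,1)] bp b' by auto
  then have "card G \<le> card (inv_gens p b)" by (rule card_mono[OF finite_inv_gens[OF p]])
  moreover have "p - b' \<noteq> 1" "p - 2 * b' \<noteq> 1" "p \<noteq> 1" "p \<noteq> 2" using bp by linarith+
  then have "card G = 5" unfolding G_def using p by simp
  ultimately show ?thesis by simp
qed

end
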